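(* A $\mathbb{B}$-topological space $(X,\tau)$ is $R_1$ if and only if both topological spaces $(X,\tau[tt])$ and $(X,\tau[ff])$ are $R_1$. Consequently, $(X,\tau)$ is Hausdorff if and only if $(X,\tau[tt])$ and $(X,\tau[ff])$ are $R_1$ and the topological space $(X,\tau[tt]\vee\tau[ff])$ is $T_0$.
   Context: $\mathbb{B}=\{0,1,tt,ff\}$ is the four-element Boolean algebra with bottom $0$, top $1$, and $tt,ff$ incomparable complements; $\neg$ its complement, $a\to b=\neg a\vee b$. A $\mathbb{B}$-topology on $X$ is $\tau\subseteq\mathbb{B}^X$ containing all constant maps and closed under arbitrary pointwise joins and finite pointwise meets; $\mu\in\mathbb{B}^X$ is closed if $\neg\mu\in\tau$. $\tau[b]=\{\lambda[b]:\lambda\in\tau\}$, $\lambda[b]=\{x:\lambda(x)\ge b\}$; $\tau[tt]\vee\tau[ff]$ is the topology generated by their union. Specialization $\mathbb{B}$-order: $\Omega(\tau)(x,y)=\bigwedge_{\lambda\in\tau}(\lambda(x)\to\lambda(y))$. The product $(X,\tau)\times(X,\tau)$ is $X\times X$ with the $\mathbb{B}$-topology generated by the constants and $\{\lambda\circ\pi_1,\lambda\circ\pi_2:\lambda\in\tau\}$. $(X,\tau)$ is $R_1$ if $\Omega(\tau)\colon X\times X\to\mathbb{B}$ is a closed set of $(X,\tau)\times(X,\tau)$; $T_0$ if $\Omega(\tau)(x,y)=1=\Omega(\tau)(y,x)$ implies $x=y$; Hausdorff if $T_0$ and $R_1$. A topological space is $R_1$ if any two points with distinct closures of singletons have disjoint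 neighbourhoods. *)

theory Defs
  imports "HOL-Analysis.Analysis" "HOL-Library.Product_Order"
begin

text \<open>The four-element Boolean algebra B = {0,1,tt,ff} is rendered as bool \<times> bool with the
componentwise (product) order: 0 = (False,False) = bot, 1 = (True,True) = top,
tt = (True,False), ff = (False,True). A B-topological space (X,tau) is modelled with X the
whole (arbitrary) type 'a.\<close>

type_synonym B4 = "bool \<times> bool"

definition tt :: B4 where "tt = (True, False)"
definition ff :: B4 where "ff = (False, True)"

definition Bimp :: "B4 \<Rightarrow> B4 \<Rightarrow> B4" where
  "Bimp a b = sup (- a) b"

definition is_Btop :: "('a \<Rightarrow> B4) set \<Rightarrow> bool" where
  "is_Btop T \<longleftrightarrow> (\<forall>c. (\<lambda>_. c) \<in> T) \<and> (\<forall>S. S \<subseteq> T \<longrightarrow> Sup S \<in> T)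
      \<and> (\<forall>l\<in>T. \<forall>m\<in>T. inf l m \<in> T)"

definition Bclosed :: "('a \<Rightarrow> B4) set \<Rightarrow> ('a \<Rightarrow> B4) \<Rightarrow> bool" where
  "Bclosed T m \<longleftrightarrow> (- m) \<in> T"

definition Btop_generated :: "('a \<Rightarrow> B4) set \<Rightarrow> ('a \<Rightarrow> B4) set" where
  "Btop_generated S = \<Inter>{T. is_Btop T \<and> S \<subseteq> T}"

definition level :: "('a \<Rightarrow> B4) \<Rightarrow> B4 \<Rightarrow> 'a set" where
  "level l b = {x. b \<le> l x}"

definition level_top :: "('a \<Rightarrow> B4) set \<Rightarrow> B4 \<Rightarrow> 'a topology" where
  "level_top T b = topology (\<lambda>U. U \<in> (\<lambda>l. level l b) ` T)"

definition join_top :: "'a topology \<Rightarrow> 'a topology \<Rightarrow> 'a topology" where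
  "join_top X Y = topology_generated_by ({U. openin X U} \<union> {U. openin Y U})"

definition Omega :: "('a \<Rightarrow> B4) set \<Rightarrow> 'a \<Rightarrow> 'a \<Rightarrow> B4" where
  "Omega T x y = (INF l\<in>T. Bimp (l x) (l y))"

definition Bprod :: "('a \<Rightarrow> B4) set \<Rightarrow> ('a \<times> 'a \<Rightarrow> B4) set" where
  "Bprod T = Btop_generated (range (\<lambda>c. (\<lambda>_. c)) \<union> (\<lambda>l. l \<circ> fst) ` T \<union> (\<lambda>l. l \<circ> snd) ` T)"

definition B_R1 :: "('a \<Rightarrow> B4) set \<Rightarrow> bool" where
  "B_R1 T \<longleftrightarrow> Bclosed (Bprod T) (\<lambda>(x, y). Omega T x y)"

definition B_T0 :: "('a \<Rightarrow> B4) set \<Rightarrow> bool" where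
  "B_T0 T \<longleftrightarrow> (\<forall>x y. Omega T x y = top \<and> Omega T y x = top \<longrightarrow> x = y)"

definition B_Hausdorff :: "('a \<Rightarrow> B4) set \<Rightarrow> bool" where
  "B_Hausdorff T \<longleftrightarrow> B_T0 T \<and> B_R1 T"

definition R1_space :: "'a topology \<Rightarrow> bool" where
  "R1_space X \<longleftrightarrow> (\<forall>x\<in>topspace X. \<forall>y\<in>topspace X.
      X closure_of {x} \<noteq> X closure_of {y} \<longrightarrow>
      (\<exists>U V. openin X U \<and> openin X V \<and> x \<in> U \<and> y \<in> V \<and> disjnt U V))"

end

theory Submission
  imports Defs
begin

text \<open>The algebra B is the product of two copies of the two-element algebra, and its atoms tt and ff
pick out the two coordinates. Taking the level at an atom therefore commutes with arbitrary joins,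
finite meets and complement. Consequently a map belongs to a B-topology iff both of its levels are
open, the levels of the product B-topology are the product topologies of the levels, and the levels
of the specialization B-order \<open>Omega T\<close> are the specialization preorders of the level topologies.
Being B-R1 thus splits into the two level topologies having a closed specialization preorder in
X \<times> X, which is the classical characterization of R1 spaces; likewise B-T0 says exactly that
the level topologies jointly separate points, i.e. that their join is T0.\<close>

section \<open>Specialization and separation in topological spaces\<close>

lemma closure_of_sing_eq_iff:
  assumes "x \<in> topspace X" "y \<in> topspace X"
  shows "X closure_of {x} = X closure_of {y} \<longleftrightarrow> x \<in> X closure_of {y} \<and> y \<in> X closure_of {x}"
  using assms by (auto simp: in_closure_of set_eq_iff)

lemma Times_subset_not_in_closure_iff_disjnt:
  assumes "openin X U" "openin X V"
  shows "U \<times> V \<subseteq> {(x, y). x \<in> topspace X \<and> y \<in> topspace X \<and> x \<notin> X closure_of {y}}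
    \<longleftrightarrow> disjnt U V"
proof
  assume sub: "U \<times> V \<subseteq> {(x, y). x \<in> topspace X \<and> y \<in> topspace X \<and> x \<notin> X closure_of {y}}"
  show "disjnt U V"
    unfolding disjnt_iff
  proof (intro allI notI)
    fix z assume z: "z \<in> U \<and> z \<in> V"
    then have "z \<notin> X closure_of {z}" using sub by blast
    moreover have "z \<in> topspace X" using z openin_subset[OF assms(1)] by blast
    ultimately show False using closure_of_subset[of "{z}" X] by blast
  qed
next
  assume "disjnt U V"
  then have "x \<notin> X closure_of {y}" if "x \<in> U" "y \<in> V" for x y
    using that assms(1) \<open>disjnt U V\<close> unfolding in_closure_of disjnt_iff by blast
  then show "U \<times> V \<subseteq> {(x, y). x \<in> topspace X \<and> y \<in> topspace X \<and> x \<notin> X closure_of {y}}"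
    using openin_subset[OF assms(1)] openin_subset[OF assms(2)] by blast
qed

lemma R1_space_iff_separated_non_specialized:
  "R1_space X \<longleftrightarrow> (\<forall>x\<in>topspace X. \<forall>y\<in>topspace X. x \<notin> X closure_of {y} \<longrightarrow>
      (\<exists>U V. openin X U \<and> openin X V \<and> x \<in> U \<and> y \<in> V \<and> disjnt U V))"
  unfolding R1_space_def
proof (intro iffI ballI impI)
  fix x y assume x: "x \<in> topspace X" and y: "y \<in> topspace X" and "x \<notin> X closure_of {y}"
    and R1: "\<forall>x\<in>topspace X. \<forall>y\<in>topspace X. X closure_of {x} \<noteq> X closure_of {y} \<longrightarrow>
      (\<exists>U V. openin X U \<and> openin X V \<and> x \<in> U \<and> y \<in> V \<and> disjnt U V)"
  then have "X closure_of {x} \<noteq> X closure_of {y}"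
    using closure_of_sing_eq_iff[OF x y] by simp
  then show "\<exists>U V. openin X U \<and> openin X V \<and> x \<in> U \<and> y \<in> V \<and> disjnt U V"
    using R1 x y by blast
next
  fix x y assume x: "x \<in> topspace X" and y: "y \<in> topspace X"
    and "X closure_of {x} \<noteq> X closure_of {y}"
    and sep: "\<forall>x\<in>topspace X. \<forall>y\<in>topspace X. x \<notin> X closure_of {y} \<longrightarrow>
      (\<exists>U V. openin X U \<and> openin X V \<and> x \<in> U \<and> y \<in> V \<and> disjnt U V)"
  then consider "x \<notin> X closure_of {y}" | "y \<notin> X closure_of {x}"
    using closure_of_sing_eq_iff[OF x y] by auto
  then show "\<exists>U V. openin X U \<and> openin X V \<and> x \<in> U \<and> y \<in> V \<and> disjnt U V"
  proof cases
    case 1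
    then show ?thesis using x y sep by blast
  next
    case 2
    then obtain U V where "openin X U" "openin X V" "y \<in> U" "x \<in> V" "disjnt U V"
      using x y sep by blast
    then show ?thesis using disjnt_sym by blast
  qed
qed

lemma R1_space_iff_closedin_in_closure:
  "R1_space X \<longleftrightarrow> closedin (prod_topology X X) {(x, y). x \<in> X closure_of {y}}"
proof -
  let ?N = "{(x, y). x \<in> topspace X \<and> y \<in> topspace X \<and> x \<notin> X closure_of {y}}"
  have "(\<exists>U V. openin X U \<and> openin X V \<and> x \<in> U \<and> y \<in> V \<and> U \<times> V \<subseteq> ?N) \<longleftrightarrow>
      (\<exists>U V. openin X U \<and> openin X V \<and> x \<in> U \<and> y \<in> V \<and> disjnt U V)" for x y
  proof
    assume "\<exists>U V. openin X U \<and> openin X V \<and> x \<in> U \<and> y \<in> V \<and> U \<times> V \<subseteq> ?N"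
    then obtain U V where "openin X U" "openin X V" "x \<in> U" "y \<in> V" "U \<times> V \<subseteq> ?N"
      by blast
    then show "\<exists>U V. openin X U \<and> openin X V \<and> x \<in> U \<and> y \<in> V \<and> disjnt U V"
      using Times_subset_not_in_closure_iff_disjnt[of X U V] by blast
  next
    assume "\<exists>U V. openin X U \<and> openin X V \<and> x \<in> U \<and> y \<in> V \<and> disjnt U V"
    then obtain U V where "openin X U" "openin X V" "x \<in> U" "y \<in> V" "disjnt U V"
      by blast
    then show "\<exists>U V. openin X U \<and> openin X V \<and> x \<in> U \<and> y \<in> V \<and> U \<times> V \<subseteq> ?N"
      using Times_subset_not_in_closure_iff_disjnt[of X U V] by blast
  qed
  then have "R1_space X \<longleftrightarrow> openin (prod_topology X X) ?N"
    unfolding R1_space_iff_separated_non_specialized openin_prod_topology_alt by auto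
  moreover have "?N = topspace (prod_topology X X) - {(x, y). x \<in> X closure_of {y}}"
    by auto
  moreover have "{(x, y). x \<in> X closure_of {y}} \<subseteq> topspace (prod_topology X X)"
    by (auto simp: in_closure_of)
  ultimately show ?thesis by (simp add: closedin_def)
qed

lemma ex_openin_separating_iff:
  assumes "x \<in> topspace X" "y \<in> topspace X"
  shows "(\<exists>U. openin X U \<and> (x \<notin> U \<longleftrightarrow> y \<in> U)) \<longleftrightarrow>
    \<not> (x \<in> X closure_of {y} \<and> y \<in> X closure_of {x})"
  using assms unfolding in_closure_of by auto

lemma generate_topology_on_not_separating:
  assumes "generate_topology_on S U" "\<forall>V\<in>S. x \<in> V \<longleftrightarrow> y \<in> V"
  shows "x \<in> U \<longleftrightarrow> y \<in> U"
proof -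
  have "istopology (\<lambda>U. x \<in> U \<longleftrightarrow> y \<in> U)"
    unfolding istopology_def by blast
  then show ?thesis
    by (rule generate_topology_on_coarsest[where T = "\<lambda>U. x \<in> U \<longleftrightarrow> y \<in> U"]) (use assms in auto)
qed

lemma t0_space_topology_generated_by:
  "t0_space (topology_generated_by S) \<longleftrightarrow>
    (\<forall>x\<in>\<Union>S. \<forall>y\<in>\<Union>S. x \<noteq> y \<longrightarrow> (\<exists>U\<in>S. x \<notin> U \<longleftrightarrow> y \<in> U))"
proof -
  have "(\<exists>U. openin (topology_generated_by S) U \<and> (x \<notin> U \<longleftrightarrow> y \<in> U)) \<longleftrightarrow>
      (\<exists>U\<in>S. x \<notin> U \<longleftrightarrow> y \<in> U)" for x y
    unfolding openin_topology_generated_by_iff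
  proof
    assume "\<exists>U. generate_topology_on S U \<and> (x \<notin> U \<longleftrightarrow> y \<in> U)"
    then obtain U where U: "generate_topology_on S U" "x \<notin> U \<longleftrightarrow> y \<in> U"
      by blast
    show "\<exists>U\<in>S. x \<notin> U \<longleftrightarrow> y \<in> U"
    proof (rule ccontr)
      assume "\<not> (\<exists>U\<in>S. x \<notin> U \<longleftrightarrow> y \<in> U)"
      then have "x \<in> U \<longleftrightarrow> y \<in> U"
        by (intro generate_topology_on_not_separating[OF U(1)]) blast
      with U(2) show False by blast
    qed
  next
    assume "\<exists>U\<in>S. x \<notin> U \<longleftrightarrow> y \<in> U"
    then show "\<exists>U. generate_topology_on S U \<and> (x \<notin> U \<longleftrightarrow> y \<in> U)"
      using generate_topology_on.Basis by blast
  qed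
  then show ?thesis
    unfolding t0_space_def by simp
qed

lemma topspace_join_top: "topspace (join_top X Y) = topspace X \<union> topspace Y"
  unfolding join_top_def using openin_subset by auto

lemma t0_space_join_top:
  "t0_space (join_top X Y) \<longleftrightarrow>
    (\<forall>x\<in>topspace X \<union> topspace Y. \<forall>y\<in>topspace X \<union> topspace Y. x \<noteq> y \<longrightarrow>
      (\<exists>U. (openin X U \<or> openin Y U) \<and> (x \<notin> U \<longleftrightarrow> y \<in> U)))"
proof -
  have "\<Union>({U. openin X U} \<union> {U. openin Y U}) = topspace X \<union> topspace Y"
    using topspace_join_top[of X Y] unfolding join_top_def by simp
  then show ?thesis
    unfolding join_top_def t0_space_topology_generated_by
    by (simp only: Bex_def Un_iff mem_Collect_eq)
qed

section \<open>B-topologies and their levels\<close>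

lemma tt_le_iff: "tt \<le> b \<longleftrightarrow> fst b"
  by (cases b) (simp add: tt_def)

lemma ff_le_iff: "ff \<le> b \<longleftrightarrow> snd b"
  by (cases b) (simp add: ff_def)

lemma eq_top_iff_tt_ff_le: "b = top \<longleftrightarrow> tt \<le> b \<and> ff \<le> b"
  by (cases b) (simp add: tt_def ff_def top_prod_def)

lemma atom_le_Sup_iff: "a \<in> {tt, ff} \<Longrightarrow> a \<le> Sup S \<longleftrightarrow> (\<exists>s\<in>S. a \<le> s)"
  by (auto simp: tt_le_iff ff_le_iff fst_Sup snd_Sup; metis fst_conv snd_conv)

lemma atom_le_sup_iff: "a \<in> {tt, ff} \<Longrightarrow> a \<le> sup b c \<longleftrightarrow> a \<le> b \<or> a \<le> c"
  by (auto simp: tt_le_iff ff_le_iff)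

lemma atom_le_uminus_iff: "a \<in> {tt, ff} \<Longrightarrow> a \<le> - b \<longleftrightarrow> \<not> a \<le> b"
  by (auto simp: tt_le_iff ff_le_iff uminus_prod_def)

lemma Btop_const_mem: "is_Btop T \<Longrightarrow> (\<lambda>_. c) \<in> T"
  unfolding is_Btop_def by blast

lemma Btop_Sup_mem: "is_Btop T \<Longrightarrow> S \<subseteq> T \<Longrightarrow> Sup S \<in> T"
  unfolding is_Btop_def by blast

lemma Btop_inf_mem: "is_Btop T \<Longrightarrow> l \<in> T \<Longrightarrow> m \<in> T \<Longrightarrow> inf l m \<in> T"
  unfolding is_Btop_def by blast

lemma Btop_sup_mem: "is_Btop T \<Longrightarrow> l \<in> T \<Longrightarrow> m \<in> T \<Longrightarrow> sup l m \<in> T"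
  using Btop_Sup_mem[of T "{l, m}"] by simp

lemma is_Btop_Btop_generated: "is_Btop (Btop_generated S)"
  unfolding is_Btop_def Btop_generated_def by blast

lemma Btop_generated_subset: "S \<subseteq> Btop_generated S"
  unfolding Btop_generated_def by blast

lemma Btop_generated_minimal: "is_Btop T \<Longrightarrow> S \<subseteq> T \<Longrightarrow> Btop_generated S \<subseteq> T"
  unfolding Btop_generated_def by blast

lemma is_Btop_Bprod: "is_Btop (Bprod T)"
  unfolding Bprod_def by (rule is_Btop_Btop_generated)

lemma comp_fst_mem_Bprod: "l \<in> T \<Longrightarrow> l \<circ> fst \<in> Bprod T"
  unfolding Bprod_def by (rule subsetD[OF Btop_generated_subset]) simp

lemma comp_snd_mem_Bprod: "l \<in> T \<Longrightarrow> l \<circ> snd \<in> Bprod T"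
  unfolding Bprod_def by (rule subsetD[OF Btop_generated_subset]) simp

lemma level_Sup: "a \<in> {tt, ff} \<Longrightarrow> level (Sup S) a = (\<Union>\<mu>\<in>S. level \<mu> a)"
  by (auto simp: level_def atom_le_Sup_iff)

lemma level_inf: "level (inf l m) a = level l a \<inter> level m a"
  by (auto simp: level_def)

lemma level_const: "level (\<lambda>_. c) a = (if a \<le> c then UNIV else {})"
  by (simp add: level_def)

lemma level_comp: "level (l \<circ> f) a = f -` level l a"
  by (auto simp: level_def)

lemma level_rectangle: "level (inf (l \<circ> fst) (m \<circ> snd)) a = level l a \<times> level m a"
  by (auto simp: level_def)

lemma istopology_levels:
  assumes T: "is_Btop T" and a: "a \<in> {tt, ff}"
  shows "istopology (\<lambda>U. \<exists>l\<in>T. U = level l a)"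
  unfolding istopology_def
proof (intro conjI allI impI)
  fix U V assume "\<exists>l\<in>T. U = level l a" "\<exists>l\<in>T. V = level l a"
  then obtain l m where "l \<in> T" "m \<in> T" "U = level l a" "V = level m a"
    by blast
  then have "inf l m \<in> T" "U \<inter> V = level (inf l m) a"
    by (simp_all add: Btop_inf_mem[OF T] level_inf)
  then show "\<exists>l\<in>T. U \<inter> V = level l a" by blast
next
  fix K assume K: "\<forall>U\<in>K. \<exists>l\<in>T. U = level l a"
  define S where "S = {l\<in>T. level l a \<subseteq> \<Union>K}"
  have "Sup S \<in> T"
    by (rule Btop_Sup_mem[OF T]) (simp add: S_def)
  moreover have "\<Union>K = level (Sup S) a"
  proof
    show "\<Union>K \<subseteq> level (Sup S) a"
      unfolding level_Sup[OF a] S_def using K by fastforce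
    show "level (Sup S) a \<subseteq> \<Union>K"
      unfolding level_Sup[OF a] S_def by blast
  qed
  ultimately show "\<exists>l\<in>T. \<Union>K = level l a" by blast
qed

lemma openin_level_top:
  assumes "is_Btop T" "a \<in> {tt, ff}"
  shows "openin (level_top T a) U \<longleftrightarrow> (\<exists>l\<in>T. U = level l a)"
proof -
  have "(\<lambda>U. U \<in> (\<lambda>l. level l a) ` T) = (\<lambda>U. \<exists>l\<in>T. U = level l a)"
    by auto
  then show ?thesis
    unfolding level_top_def using topology_inverse'[OF istopology_levels[OF assms]] by simp
qed

lemma topspace_level_top:
  assumes "is_Btop T" "a \<in> {tt, ff}"
  shows "topspace (level_top T a) = UNIV"
proof -
  have "openin (level_top T a) (level (\<lambda>_. top) a)"
    unfolding openin_level_top[OF assms] using Btop_const_mem[OF assms(1)] by blast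
  then show ?thesis
    using openin_subset by (fastforce simp: level_const)
qed

lemma in_closure_of_level_top:
  assumes "is_Btop T" "a \<in> {tt, ff}"
  shows "x \<in> level_top T a closure_of {y} \<longleftrightarrow> (\<forall>l\<in>T. a \<le> l x \<longrightarrow> a \<le> l y)"
  unfolding in_closure_of topspace_level_top[OF assms] openin_level_top[OF assms]
  by (auto simp: level_def)

lemma atom_le_Omega_iff:
  assumes "is_Btop T" "a \<in> {tt, ff}"
  shows "a \<le> Omega T x y \<longleftrightarrow> x \<in> level_top T a closure_of {y}"
  using assms(2) unfolding in_closure_of_level_top[OF assms] Omega_def Bimp_def
  by (simp add: le_INF_iff atom_le_sup_iff atom_le_uminus_iff)

lemma level_uminus_Omega:
  assumes "is_Btop T" "a \<in> {tt, ff}"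
  shows "level (- (\<lambda>(x, y). Omega T x y)) a = - {(x, y). x \<in> level_top T a closure_of {y}}"
  using assms by (auto simp: level_def atom_le_uminus_iff atom_le_Omega_iff)

lemma Btop_mem_iff_openin_levels:
  assumes T: "is_Btop T"
  shows "\<mu> \<in> T \<longleftrightarrow> (\<forall>a\<in>{tt, ff}. openin (level_top T a) (level \<mu> a))"
proof
  assume "\<mu> \<in> T"
  then show "\<forall>a\<in>{tt, ff}. openin (level_top T a) (level \<mu> a)"
    by (auto simp: openin_level_top[OF T])
next
  assume "\<forall>a\<in>{tt, ff}. openin (level_top T a) (level \<mu> a)"
  then obtain l m where lm: "l \<in> T" "m \<in> T" "level \<mu> tt = level l tt" "level \<mu> ff = level m ff"
    by (auto simp: openin_level_top[OF T])
  have "\<mu> x = sup (inf (l x) tt) (inf (m x) ff)" for x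
    using lm(3,4) unfolding set_eq_iff level_def tt_le_iff ff_le_iff
    by (simp add: prod_eq_iff tt_def ff_def)
  then have "\<mu> = sup (inf l (\<lambda>_. tt)) (inf m (\<lambda>_. ff))"
    by auto
  also have "\<dots> \<in> T"
    using lm(1,2) by (simp add: Btop_sup_mem Btop_inf_mem Btop_const_mem T)
  finally show "\<mu> \<in> T" .
qed

lemma openin_prod_topology_level_Bprod:
  assumes T: "is_Btop T" and a: "a \<in> {tt, ff}" and \<mu>: "\<mu> \<in> Bprod T"
  shows "openin (prod_topology (level_top T a) (level_top T a)) (level \<mu> a)"
proof -
  let ?X = "prod_topology (level_top T a) (level_top T a)"
  let ?G = "{\<mu>. openin ?X (level \<mu> a)}"
  have const: "(\<lambda>_. c) \<in> ?G" for c
    using openin_topspace[of ?X] by (simp add: level_const topspace_level_top[OF T a])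
  have "is_Btop ?G"
    unfolding is_Btop_def
  proof (intro conjI allI impI ballI const)
    fix S assume "S \<subseteq> ?G"
    then show "Sup S \<in> ?G"
      by (auto simp: level_Sup[OF a])
  next
    fix l m assume "l \<in> ?G" "m \<in> ?G"
    then show "inf l m \<in> ?G"
      by (auto simp: level_inf)
  qed
  moreover have "l \<circ> fst \<in> ?G" "l \<circ> snd \<in> ?G" if "l \<in> T" for l
  proof -
    have "openin (level_top T a) (level l a)" "openin (level_top T a) UNIV"
      using that openin_topspace[of "level_top T a"]
      by (auto simp: openin_level_top[OF T a] topspace_level_top[OF T a])
    then show "l \<circ> fst \<in> ?G" "l \<circ> snd \<in> ?G"
      by (simp_all add: level_comp vimage_fst vimage_snd openin_prod_Times_iff)
  qed
  ultimately have "Bprod T \<subseteq> ?G"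
    unfolding Bprod_def using const by (intro Btop_generated_minimal) auto
  then show ?thesis using \<mu> by blast
qed

lemma level_Bprod_if_openin_prod_topology:
  assumes T: "is_Btop T" and a: "a \<in> {tt, ff}"
    and W: "openin (prod_topology (level_top T a) (level_top T a)) W"
  shows "\<exists>\<mu>\<in>Bprod T. W = level \<mu> a"
proof
  define R where "R = {inf (l \<circ> fst) (m \<circ> snd) | l m. l \<in> T \<and> m \<in> T \<and> level l a \<times> level m a \<subseteq> W}"
  show "Sup R \<in> Bprod T"
    by (rule Btop_Sup_mem[OF is_Btop_Bprod])
      (auto simp: R_def intro!: Btop_inf_mem[OF is_Btop_Bprod] comp_fst_mem_Bprod comp_snd_mem_Bprod)
  show "W = level (Sup R) a"
    unfolding level_Sup[OF a]
  proof
    show "W \<subseteq> (\<Union>\<mu>\<in>R. level \<mu> a)"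
    proof
      fix q assume "q \<in> W"
      then obtain U V where "openin (level_top T a) U" "openin (level_top T a) V"
        "q \<in> U \<times> V" "U \<times> V \<subseteq> W"
        using W unfolding openin_prod_topology_alt by (metis mem_Sigma_iff surj_pair)
      then obtain l m where "l \<in> T" "m \<in> T" "q \<in> level l a \<times> level m a"
          "level l a \<times> level m a \<subseteq> W"
        by (auto simp: openin_level_top[OF T a])
      then show "q \<in> (\<Union>\<mu>\<in>R. level \<mu> a)"
        unfolding R_def using level_rectangle by blast
    qed
    show "(\<Union>\<mu>\<in>R. level \<mu> a) \<subseteq> W"
      unfolding R_def using level_rectangle by blast
  qed
qed

lemma level_top_Bprod:
  assumes T: "is_Btop T" and a: "a \<in> {tt, ff}"
  shows "level_top (Bprod T) a = prod_topology (level_top T a) (level_top T a)"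
  unfolding topology_eq openin_level_top[OF is_Btop_Bprod a]
  using openin_prod_topology_level_Bprod[OF T a] level_Bprod_if_openin_prod_topology[OF T a]
  by blast

section \<open>R1 and T0 through the levels\<close>

lemma B_R1_iff_R1_space_levels:
  assumes T: "is_Btop T"
  shows "B_R1 T \<longleftrightarrow> (\<forall>a\<in>{tt, ff}. R1_space (level_top T a))"
proof -
  have "R1_space (level_top T a) \<longleftrightarrow> openin (level_top (Bprod T) a) (level (- (\<lambda>(x, y). Omega T x y)) a)"
    if a: "a \<in> {tt, ff}" for a
    by (simp add: R1_space_iff_closedin_in_closure closedin_def level_top_Bprod[OF T a]
        level_uminus_Omega[OF T a] topspace_level_top[OF T a] Compl_eq_Diff_UNIV)
  then show ?thesis
    unfolding B_R1_def Bclosed_def Btop_mem_iff_openin_levels[OF is_Btop_Bprod] by simp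
qed

lemma B_T0_iff_t0_space_join_top:
  assumes T: "is_Btop T"
  shows "B_T0 T \<longleftrightarrow> t0_space (join_top (level_top T tt) (level_top T ff))"
proof -
  have sep: "(\<exists>U. openin (level_top T a) U \<and> (x \<notin> U \<longleftrightarrow> y \<in> U)) \<longleftrightarrow>
      \<not> (a \<le> Omega T x y \<and> a \<le> Omega T y x)" if a: "a \<in> {tt, ff}" for a x y
    by (simp add: ex_openin_separating_iff topspace_level_top[OF T a] atom_le_Omega_iff[OF T a])
  have "t0_space (join_top (level_top T tt) (level_top T ff)) \<longleftrightarrow>
      (\<forall>x y. x \<noteq> y \<longrightarrow> \<not> (tt \<le> Omega T x y \<and> tt \<le> Omega T y x)
        \<or> \<not> (ff \<le> Omega T x y \<and> ff \<le> Omega T y x))"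
    unfolding t0_space_join_top
    by (simp add: conj_disj_distribR ex_disj_distrib sep topspace_level_top[OF T])
  moreover have "(Omega T x y = top \<and> Omega T y x = top \<longrightarrow> x = y) \<longleftrightarrow>
      (x \<noteq> y \<longrightarrow> \<not> (tt \<le> Omega T x y \<and> tt \<le> Omega T y x)
        \<or> \<not> (ff \<le> Omega T x y \<and> ff \<le> Omega T y x))" for x y
    unfolding eq_top_iff_tt_ff_le by blast
  ultimately show ?thesis
    unfolding B_T0_def by simp
qed

theorem mainTheorem15:
  fixes T :: "('a \<Rightarrow> B4) set"
  assumes "is_Btop T"
  shows "(B_R1 T \<longleftrightarrow> R1_space (level_top T tt) \<and> R1_space (level_top T ff))
    \<and> (B_Hausdorff T \<longleftrightarrow> R1_space (level_top T tt) \<and> R1_space (level_top T ff)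
          \<and> t0_space (join_top (level_top T tt) (level_top T ff)))"
proof -
  have "B_R1 T \<longleftrightarrow> R1_space (level_top T tt) \<and> R1_space (level_top T ff)"
    using B_R1_iff_R1_space_levels[OF assms] by simp
  moreover have "B_T0 T \<longleftrightarrow> t0_space (join_top (level_top T tt) (level_top T ff))"
    by (rule B_T0_iff_t0_space_join_top[OF assms])
  ultimately show ?thesis
    unfolding B_Hausdorff_def by blast
qed

end
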